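(* Let $v\in H^1$ and let $r\in AC[0,+\infty)$ satisfy $r(0)>0$ and $\underline{\theta}\le r^2\partial_xr\le\overline{\theta}$ (a.e.) for some constants $0<\underline\theta\le\overline\theta<+\infty$. Then $$\int_0^\infty(r^2\partial_xr)^{-1}\big(\partial_x(r^2v)\big)^2dx+2rv^2\big|_{x=0}=\int_0^\infty(r^2\partial_xr)^{-1}(r^2\partial_xv)^2dx+2\int_0^\infty(r^2\partial_xr)r^{-2}v^2dx,$$ and for every $x\ge0$, $$|v(x)|^2\le r(x)^{-2}\big(\|v\|_{L^2}^2+\|r^2\partial_xv\|_{L^2}^2\big),\qquad |v(x)|^2\le r(x)^{-2}\Big(\big(8r(0)^{-2}\overline\theta^2+1\big)\|v\|_{L^2}^2+2\|\partial_x(r^2v)\|_{L^2}^2\Big).$$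
   Context: $L^2=L^2(0,+\infty)$. With $\xi(x)=(1+3x)^{1/3}$, $H^1$ is the space of $v\in L^2(0,\infty)$ with $\xi^2\partial_xv\in L^2(0,\infty)$. *)

theory Defs
  imports "HOL-Analysis.Analysis"
begin

definition xi :: "real \<Rightarrow> real" where
  "xi x = (1 + 3 * x) powr (1/3)"

text \<open>f is (locally) absolutely continuous on [0,+infinity) with a.e. derivative f':
  f' is integrable on every [0,x] and f x = f 0 + integral of f' over [0,x].\<close>
definition ac_deriv_nonneg :: "(real \<Rightarrow> real) \<Rightarrow> (real \<Rightarrow> real) \<Rightarrow> bool" where
  "ac_deriv_nonneg f f' \<longleftrightarrow>
     (\<forall>x\<ge>0. set_integrable lborel {0..x} f' \<and> f x = f 0 + (LINT t:{0..x}|lborel. f' t))"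

text \<open>v (continuous representative) is in H^1 with weak derivative v':
  v in L^2(0,inf) and xi^2 v' in L^2(0,inf).\<close>
definition H1 :: "(real \<Rightarrow> real) \<Rightarrow> (real \<Rightarrow> real) \<Rightarrow> bool" where
  "H1 v v' \<longleftrightarrow> ac_deriv_nonneg v v'
     \<and> set_integrable lborel {0<..} (\<lambda>x. (v x)^2)
     \<and> set_integrable lborel {0<..} (\<lambda>x. (xi x ^ 2 * v' x)^2)"

end

theory Submission
  imports Defs
begin

(* Put w = r^2 r'.  Since (r^3)' = 3 w, the cube r^3 grows linearly with slopes between
   3 theta_lo and 3 theta_hi; hence r >= r(0), r tends to infinity, r <= C xi, and r^2 v' is
   square integrable.  The products r v^2 and r^2 v^2 are absolutely continuous with integrable
   derivatives, so they converge at infinity.  Both limits vanish: if r^2 v^2 >= c > 0 near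
   infinity, then r' = w / r^2 <= (theta_hi / c) v^2 there, so r would stay bounded; and
   r v^2 <= r^2 v^2 / r(0).
   Integrating (r v^2)' over (0, inf) gives r(0) v(0)^2 = - int (r' v^2 + 2 r v v'), which
   together with the pointwise expansion
     (r^2 v)'^2 / w = 4 r' v^2 + 4 r v v' + (r^2 v')^2 / w
   is the identity.  Integrating (r^2 v^2)' over (x, inf) and using r r' >= 0 gives
   r(x)^2 v(x)^2 <= int (v^2 + (r^2 v')^2), and the last bound follows by writing
   r^2 v' = (r^2 v)' - 2 r r' v with r r' <= theta_hi / r(0). *)

section \<open>Integration by parts for primitives\<close>

lemma integrable_tensor_product:
  fixes a b :: "real \<Rightarrow> real"
  assumes a: "integrable lborel a" and b: "integrable lborel b"
  shows "integrable (lborel \<Otimes>\<^sub>M lborel) (\<lambda>(t, s). a t * b s)"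
proof (rule lborel_pair.Fubini_integrable)
  show "(\<lambda>(t, s). a t * b s) \<in> borel_measurable (lborel \<Otimes>\<^sub>M lborel)"
    using a b by measurable
  show "integrable lborel (\<lambda>t. LINT s|lborel. norm (case (t, s) of (t, s) \<Rightarrow> a t * b s))"
    using a b by (simp add: abs_mult)
  show "AE t in lborel. integrable lborel (\<lambda>s. case (t, s) of (t, s) \<Rightarrow> a t * b s)"
    using b by simp
qed

lemma integrable_tensor_product_on:
  fixes a b :: "real \<Rightarrow> real"
  assumes "integrable lborel a" "integrable lborel b" "S \<in> sets (lborel \<Otimes>\<^sub>M lborel)"
  shows "integrable (lborel \<Otimes>\<^sub>M lborel) (\<lambda>(t, s). indicator S (t, s) * (a t * b s))"
  using integrable_mult_indicator[OF assms(3) integrable_tensor_product[OF assms(1,2)]]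
  by (simp add: split_beta')

lemma integral_split_at:
  fixes b :: "real \<Rightarrow> real"
  assumes b: "integrable lborel b"
  shows "(LINT s|lborel. indicator {..t} s * b s) + (LINT s|lborel. indicator {t..} s * b s)
    = (LINT s|lborel. b s)"
proof -
  have "(LINT s|lborel. indicator {t..} s * b s) = (LINT s|lborel. indicator {t<..} s * b s)"
    using AE_lborel_singleton[of t] b by (intro integral_cong_AE) (auto simp: indicator_def)
  moreover have "(LINT s|lborel. indicator {..t} s * b s) + (LINT s|lborel. indicator {t<..} s * b s)
      = (LINT s|lborel. indicator {..t} s * b s + indicator {t<..} s * b s)"
    using integrable_mult_indicator[OF _ b, of "{..t}"] integrable_mult_indicator[OF _ b, of "{t<..}"]
    by (intro Bochner_Integration.integral_add[symmetric]) auto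
  moreover have "(LINT s|lborel. indicator {..t} s * b s + indicator {t<..} s * b s) = (LINT s|lborel. b s)"
    by (rule Bochner_Integration.integral_cong) (auto simp: indicator_def)
  ultimately show ?thesis
    by simp
qed

lemma sets_pair_lborel_le:
  "{p :: real \<times> real. snd p \<le> fst p} \<in> sets (lborel \<Otimes>\<^sub>M lborel)"
  "{p :: real \<times> real. fst p \<le> snd p} \<in> sets (lborel \<Otimes>\<^sub>M lborel)"
proof -
  have "Measurable.pred (lborel \<Otimes>\<^sub>M lborel) (\<lambda>p::real \<times> real. snd p \<le> fst p)"
    by measurable
  then show "{p :: real \<times> real. snd p \<le> fst p} \<in> sets (lborel \<Otimes>\<^sub>M lborel)"
    by (simp add: pred_def space_pair_measure)
  have "Measurable.pred (lborel \<Otimes>\<^sub>M lborel) (\<lambda>p::real \<times> real. fst p \<le> snd p)"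
    by measurable
  then show "{p :: real \<times> real. fst p \<le> snd p} \<in> sets (lborel \<Otimes>\<^sub>M lborel)"
    by (simp add: pred_def space_pair_measure)
qed

text \<open>Cut the plane along the diagonal and apply Fubini's theorem to the upper half.\<close>
lemma integral_primitive_by_parts:
  fixes a b :: "real \<Rightarrow> real"
  assumes a: "integrable lborel a" and b: "integrable lborel b"
  shows "integrable lborel (\<lambda>t. a t * (LINT s|lborel. indicator {..t} s * b s))"
    and "(LINT t|lborel. a t * (LINT s|lborel. indicator {..t} s * b s))
           + (LINT s|lborel. b s * (LINT t|lborel. indicator {..s} t * a t))
         = (LINT t|lborel. a t) * (LINT s|lborel. b s)"
proof -
  define below :: "(real \<times> real) set" where "below = {p. snd p \<le> fst p}"
  define above :: "(real \<times> real) set" where "above = {p. fst p \<le> snd p}"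
  have "below \<in> sets (lborel \<Otimes>\<^sub>M lborel)" and "above \<in> sets (lborel \<Otimes>\<^sub>M lborel)"
    unfolding below_def above_def by (fact sets_pair_lborel_le)+
  note int_below = integrable_tensor_product_on[OF a b \<open>below \<in> _\<close>]
  note int_above = integrable_tensor_product_on[OF a b \<open>above \<in> _\<close>]
  have inner_below: "(LINT s|lborel. indicator below (t, s) * (a t * b s))
      = a t * (LINT s|lborel. indicator {..t} s * b s)" for t
    by (simp add: below_def indicator_def mult.left_commute flip: integral_mult_right_zero)
  have inner_above: "(LINT s|lborel. indicator above (t, s) * (a t * b s))
      = a t * (LINT s|lborel. indicator {t..} s * b s)" for t
    by (simp add: above_def indicator_def mult.left_commute flip: integral_mult_right_zero)
  have inner_above': "(LINT t|lborel. indicator above (t, s) * (a t * b s))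
      = b s * (LINT t|lborel. indicator {..s} t * a t)" for s
    by (simp add: above_def indicator_def mult_ac flip: integral_mult_right_zero)
  show "integrable lborel (\<lambda>t. a t * (LINT s|lborel. indicator {..t} s * b s))"
    using lborel_pair.integrable_fst[OF int_below] by (simp add: inner_below)
  have "(LINT t|lborel. LINT s|lborel. indicator below (t, s) * (a t * b s))
      + (LINT t|lborel. LINT s|lborel. indicator above (t, s) * (a t * b s))
      = (LINT t|lborel. a t * (LINT s|lborel. b s))"
  proof -
    have "(LINT t|lborel. a t * (LINT s|lborel. indicator {..t} s * b s))
        + (LINT t|lborel. a t * (LINT s|lborel. indicator {t..} s * b s))
        = (LINT t|lborel. a t * (LINT s|lborel. indicator {..t} s * b s)
            + a t * (LINT s|lborel. indicator {t..} s * b s))"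
      using lborel_pair.integrable_fst[OF int_below] lborel_pair.integrable_fst[OF int_above]
      unfolding inner_below inner_above by (rule Bochner_Integration.integral_add[symmetric])
    then show ?thesis
      unfolding inner_below inner_above by (simp add: integral_split_at[OF b] flip: distrib_left)
  qed
  moreover have "(LINT t|lborel. LINT s|lborel. indicator above (t, s) * (a t * b s))
      = (LINT s|lborel. LINT t|lborel. indicator above (t, s) * (a t * b s))"
    using lborel_pair.Fubini_integral[OF int_above] by simp
  ultimately show "(LINT t|lborel. a t * (LINT s|lborel. indicator {..t} s * b s))
      + (LINT s|lborel. b s * (LINT t|lborel. indicator {..s} t * a t))
      = (LINT t|lborel. a t) * (LINT s|lborel. b s)"
    unfolding inner_below inner_above' by simp
qed

lemma set_integral_primitive_by_parts:
  fixes f g :: "real \<Rightarrow> real"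
  assumes f: "set_integrable lborel {0..x} f" and g: "set_integrable lborel {0..x} g"
  shows "set_integrable lborel {0..x} (\<lambda>t. f t * (LINT s:{0..t}|lborel. g s))"
    and "(LINT t:{0..x}|lborel. f t * (LINT s:{0..t}|lborel. g s))
           + (LINT t:{0..x}|lborel. g t * (LINT s:{0..t}|lborel. f s))
         = (LINT t:{0..x}|lborel. f t) * (LINT t:{0..x}|lborel. g t)"
proof -
  define a where "a t = indicator {0..x} t * f t" for t
  define b where "b t = indicator {0..x} t * g t" for t
  have a: "integrable lborel a" and b: "integrable lborel b"
    using f g unfolding a_def b_def set_integrable_def by simp_all
  have primitive: "(LINT s|lborel. indicator {..t} s * (indicator {0..x} s * h s))
      = (LINT s:{0..t}|lborel. h s)" if "t \<le> x" for h :: "real \<Rightarrow> real" and t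
  proof -
    have "(LINT s|lborel. indicator {..t} s * (indicator {0..x} s * h s))
        = (LINT s|lborel. indicator {0..t} s * h s)"
      by (rule Bochner_Integration.integral_cong) (use that in \<open>auto simp: indicator_def\<close>)
    then show ?thesis
      by (simp add: set_lebesgue_integral_def)
  qed
  have primitive_f: "a t * (LINT s|lborel. indicator {..t} s * b s)
      = indicator {0..x} t * (f t * (LINT s:{0..t}|lborel. g s))" for t
    by (cases "t \<le> x") (simp_all add: a_def b_def primitive)
  have primitive_g: "b t * (LINT s|lborel. indicator {..t} s * a s)
      = indicator {0..x} t * (g t * (LINT s:{0..t}|lborel. f s))" for t
    by (cases "t \<le> x") (simp_all add: a_def b_def primitive)
  note by_parts = integral_primitive_by_parts[OF a b]
  show "set_integrable lborel {0..x} (\<lambda>t. f t * (LINT s:{0..t}|lborel. g s))"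
    using by_parts(1) unfolding set_integrable_def primitive_f by simp
  show "(LINT t:{0..x}|lborel. f t * (LINT s:{0..t}|lborel. g s))
      + (LINT t:{0..x}|lborel. g t * (LINT s:{0..t}|lborel. f s))
      = (LINT t:{0..x}|lborel. f t) * (LINT t:{0..x}|lborel. g t)"
    using by_parts(2) unfolding primitive_f primitive_g
    by (simp add: set_lebesgue_integral_def a_def b_def)
qed

section \<open>Absolutely continuous functions on the half-line\<close>

lemma set_borel_measurable_Ioi:
  fixes f :: "real \<Rightarrow> real"
  assumes "f \<in> borel_measurable (restrict_space lborel {0<..})"
  shows "set_borel_measurable lborel {0<..} f"
  using assms unfolding set_borel_measurable_def
  by (subst (asm) borel_measurable_restrict_space_iff) auto

lemma set_integrable_Ioi_bound:
  fixes f g :: "real \<Rightarrow> real"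
  assumes "set_integrable lborel {0<..} f" and "g \<in> borel_measurable (restrict_space lborel {0<..})"
    and "AE x in lborel. 0 < x \<longrightarrow> \<bar>g x\<bar> \<le> f x"
  shows "set_integrable lborel {0<..} g"
  by (rule set_integrable_bound[OF assms(1) set_borel_measurable_Ioi[OF assms(2)]])
    (use assms(3) in \<open>auto elim!: eventually_mono\<close>)

lemma set_integral_Ioi_cong_AE:
  fixes f g :: "real \<Rightarrow> real"
  assumes "f \<in> borel_measurable (restrict_space lborel {0<..})"
    and "g \<in> borel_measurable (restrict_space lborel {0<..})"
    and "AE x in lborel. 0 < x \<longrightarrow> f x = g x"
  shows "(LINT x:{0<..}|lborel. f x) = (LINT x:{0<..}|lborel. g x)"
  unfolding set_lebesgue_integral_def
  using set_borel_measurable_Ioi[OF assms(1)] set_borel_measurable_Ioi[OF assms(2)]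
  unfolding set_borel_measurable_def
  by (intro integral_cong_AE) (use assms(3) in \<open>auto elim!: eventually_mono\<close>)

lemma set_integral_mono_set:
  fixes f :: "real \<Rightarrow> real"
  assumes "set_integrable lborel B f" and "A \<in> sets lborel" and "A \<subseteq> B"
    and "\<And>x. x \<in> B \<Longrightarrow> 0 \<le> f x"
  shows "(LINT x:A|lborel. f x) \<le> (LINT x:B|lborel. f x)"
  unfolding set_lebesgue_integral_def
  using set_integrable_subset[OF assms(1-3)] assms(1) unfolding set_integrable_def
  by (intro integral_mono) (use assms(3,4) in \<open>auto simp: indicator_def\<close>)

lemma ac_deriv_nonneg_cong:
  assumes "ac_deriv_nonneg f f'"
    and "\<And>x. 0 \<le> x \<Longrightarrow> g x = f x" and "\<And>x. 0 \<le> x \<Longrightarrow> g' x = f' x"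
  shows "ac_deriv_nonneg g g'"
  unfolding ac_deriv_nonneg_def
proof (intro allI impI)
  fix x :: real
  assume "0 \<le> x"
  then have "set_integrable lborel {0..x} f'" and "f x = f 0 + (LINT t:{0..x}|lborel. f' t)"
    using assms(1) unfolding ac_deriv_nonneg_def by blast+
  moreover have "set_integrable lborel {0..x} g' = set_integrable lborel {0..x} f'"
    by (rule set_integrable_cong) (auto simp: assms(3))
  moreover have "(LINT t:{0..x}|lborel. g' t) = (LINT t:{0..x}|lborel. f' t)"
    by (rule set_lebesgue_integral_cong) (auto simp: assms(3))
  ultimately show "set_integrable lborel {0..x} g' \<and> g x = g 0 + (LINT t:{0..x}|lborel. g' t)"
    using \<open>0 \<le> x\<close> assms(2)[of x] assms(2)[of 0] by simp
qed

lemma ac_deriv_nonneg_mult: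
  assumes u: "ac_deriv_nonneg u u'" and w: "ac_deriv_nonneg w w'"
  shows "ac_deriv_nonneg (\<lambda>x. u x * w x) (\<lambda>x. u' x * w x + u x * w' x)"
  unfolding ac_deriv_nonneg_def
proof (intro allI impI)
  fix x :: real
  assume x: "0 \<le> x"
  define U where "U t = (LINT s:{0..t}|lborel. u' s)" for t
  define W where "W t = (LINT s:{0..t}|lborel. w' s)" for t
  have iu: "set_integrable lborel {0..x} u'" and iw: "set_integrable lborel {0..x} w'"
    using u w x unfolding ac_deriv_nonneg_def by blast+
  have u_eq: "u t = u 0 + U t" and w_eq: "w t = w 0 + W t" if "0 \<le> t" for t
    using u w that unfolding ac_deriv_nonneg_def U_def W_def by blast+
  note by_parts = set_integral_primitive_by_parts[OF iu iw, folded U_def W_def]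
    set_integral_primitive_by_parts(1)[OF iw iu, folded U_def W_def]
  define d where "d t = (w 0 * u' t + u 0 * w' t) + (u' t * W t + w' t * U t)" for t
  have d_eq: "u' t * w t + u t * w' t = d t" if "t \<in> {0..x}" for t
    using that u_eq[of t] w_eq[of t] by (simp add: d_def algebra_simps)
  have int_linear: "set_integrable lborel {0..x} (\<lambda>t. w 0 * u' t + u 0 * w' t)"
    and integral_linear: "(LINT t:{0..x}|lborel. w 0 * u' t + u 0 * w' t) = w 0 * U x + u 0 * W x"
    using iu iw by (simp_all add: U_def W_def)
  have int_quadratic: "set_integrable lborel {0..x} (\<lambda>t. u' t * W t + w' t * U t)"
    and integral_quadratic: "(LINT t:{0..x}|lborel. u' t * W t + w' t * U t) = U x * W x"
    using by_parts by simp_all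
  have int_d: "set_integrable lborel {0..x} d"
    unfolding d_def using int_linear int_quadratic by (rule set_integral_add)
  have "(LINT t:{0..x}|lborel. d t) = w 0 * U x + u 0 * W x + U x * W x"
    unfolding d_def set_integral_add(2)[OF int_linear int_quadratic]
    by (simp only: integral_linear integral_quadratic)
  moreover have "u x * w x = u 0 * w 0 + (w 0 * U x + u 0 * W x + U x * W x)"
    using u_eq[OF x] w_eq[OF x] by (simp add: algebra_simps)
  moreover have "set_integrable lborel {0..x} (\<lambda>t. u' t * w t + u t * w' t)"
    using int_d by (subst set_integrable_cong[OF refl refl d_eq]) auto
  moreover have "(LINT t:{0..x}|lborel. u' t * w t + u t * w' t) = (LINT t:{0..x}|lborel. d t)"
    by (rule set_lebesgue_integral_cong) (use d_eq in auto)
  ultimately show "set_integrable lborel {0..x} (\<lambda>t. u' t * w t + u t * w' t)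
      \<and> u x * w x = u 0 * w 0 + (LINT t:{0..x}|lborel. u' t * w t + u t * w' t)"
    by simp
qed

lemma ac_deriv_nonneg_continuous_on:
  assumes "ac_deriv_nonneg f f'"
  shows "continuous_on {0..b} f"
proof (cases "0 \<le> b")
  case True
  have "set_integrable lborel {0..b} f'"
    using assms True unfolding ac_deriv_nonneg_def by blast
  then have "continuous_on {0..b} (\<lambda>x. f 0 + integral {0..x} f')"
    by (intro continuous_intros indefinite_integral_continuous_1 set_borel_integral_eq_integral(1))
  moreover have "f x = f 0 + integral {0..x} f'" if "x \<in> {0..b}" for x
  proof -
    have "set_integrable lborel {0..x} f'" and "f x = f 0 + (LINT t:{0..x}|lborel. f' t)"
      using assms that unfolding ac_deriv_nonneg_def atLeastAtMost_iff by blast+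
    then show ?thesis
      by (simp add: set_borel_integral_eq_integral(2))
  qed
  ultimately show ?thesis
    by (rule continuous_on_cong[THEN iffD2, OF refl, rotated])
qed simp

text \<open>\<^const>\<open>ac_deriv_nonneg\<close> says nothing about negative arguments, so measurability
  is only available on the half-line.\<close>
lemma measurable_restrict_Ioi_of_intervals:
  fixes f :: "real \<Rightarrow> real"
  assumes "\<And>n::nat. (\<lambda>x. indicator {0..real n} x * f x) \<in> borel_measurable lborel"
  shows "f \<in> borel_measurable (restrict_space lborel {0<..})"
proof -
  have "(\<lambda>x. indicator {0..} x * f x) \<in> borel_measurable lborel"
  proof (rule borel_measurable_LIMSEQ_real[OF _ assms])
    fix x :: real
    have "\<forall>\<^sub>F n in sequentially. indicator {0..real n} x * f x = indicator {0..} x * f x"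
      using eventually_ge_at_top[of "nat \<lceil>x\<rceil>"]
    proof eventually_elim
      case (elim n)
      then have "x \<le> real n"
        using real_nat_ceiling_ge[of x] by linarith
      then show ?case
        by (auto simp: indicator_def)
    qed
    then show "(\<lambda>n. indicator {0..real n} x * f x) \<longlonglongrightarrow> indicator {0..} x * f x"
      by (rule tendsto_eventually)
  qed
  then have "(\<lambda>x. indicator {0<..} x * (indicator {0..} x * f x)) \<in> borel_measurable lborel"
    by measurable
  moreover have "(\<lambda>x. indicator {0<..} x * (indicator {0..} x * f x)) = (\<lambda>x. indicator {0<..} x *\<^sub>R f x)"
    by (auto simp: indicator_def fun_eq_iff)
  ultimately show ?thesis
    by (subst borel_measurable_restrict_space_iff) auto
qed

lemma ac_deriv_nonneg_measurable:
  assumes "ac_deriv_nonneg f f'"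
  shows "f \<in> borel_measurable (restrict_space lborel {0<..})"
    and "f' \<in> borel_measurable (restrict_space lborel {0<..})"
proof -
  show "f \<in> borel_measurable (restrict_space lborel {0<..})"
  proof (rule measurable_restrict_Ioi_of_intervals)
    fix n :: nat
    have "(\<lambda>x. indicator {0..real n} x *\<^sub>R f x) \<in> borel_measurable borel"
      by (rule borel_measurable_continuous_on_indicator) (auto intro: ac_deriv_nonneg_continuous_on[OF assms])
    then show "(\<lambda>x. indicator {0..real n} x * f x) \<in> borel_measurable lborel"
      by simp
  qed
  show "f' \<in> borel_measurable (restrict_space lborel {0<..})"
  proof (rule measurable_restrict_Ioi_of_intervals)
    fix n :: nat
    have "set_integrable lborel {0..real n} f'"
      using assms unfolding ac_deriv_nonneg_def by simp
    then show "(\<lambda>x. indicator {0..real n} x * f' x) \<in> borel_measurable lborel"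
      unfolding set_integrable_def by (simp add: borel_measurable_integrable)
  qed
qed

lemma set_integral_Ioi_eq_Ici:
  fixes f :: "real \<Rightarrow> real"
  shows "set_integrable lborel {a<..} f \<longleftrightarrow> set_integrable lborel {a..} f"
    and "(LINT x:{a<..}|lborel. f x) = (LINT x:{a..}|lborel. f x)"
  by (rule set_integrable_discrete_difference[where X="{a}"]; auto)
    (rule set_integral_discrete_difference[where X="{a}"]; auto)

lemma ac_deriv_nonneg_tendsto_at_top:
  assumes "ac_deriv_nonneg f f'" and "set_integrable lborel {0<..} f'"
  shows "(f \<longlongrightarrow> f 0 + (LINT x:{0<..}|lborel. f' x)) at_top"
proof -
  have f_eq: "f b = f 0 + (LINT x:{0..b}|lborel. f' x)" if "0 \<le> b" for b
    using assms(1) that unfolding ac_deriv_nonneg_def by blast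
  have "((\<lambda>b. LINT x:{0..b}|lborel. f' x) \<longlongrightarrow> (LINT x:{0<..}|lborel. f' x)) at_top"
    unfolding set_integral_Ioi_eq_Ici
    by (rule tendsto_set_lebesgue_integral_at_top) (use assms(2) set_integral_Ioi_eq_Ici in auto)
  then have "((\<lambda>b. f 0 + (LINT x:{0..b}|lborel. f' x)) \<longlongrightarrow> f 0 + (LINT x:{0<..}|lborel. f' x)) at_top"
    by (intro tendsto_intros)
  moreover have "\<forall>\<^sub>F b in at_top. f 0 + (LINT x:{0..b}|lborel. f' x) = f b"
    using eventually_ge_at_top[of 0] by eventually_elim (rule f_eq[symmetric])
  ultimately show ?thesis
    by (rule Lim_transform_eventually)
qed

lemma ac_deriv_nonneg_eq_tail_integral:
  assumes f: "ac_deriv_nonneg f f'" and int: "set_integrable lborel {0<..} f'"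
    and vanish: "(f \<longlongrightarrow> 0) at_top" and x: "0 \<le> x"
  shows "f x = - (LINT t:{x<..}|lborel. f' t)"
proof -
  have "f 0 + (LINT t:{0<..}|lborel. f' t) = 0"
    using tendsto_unique[OF _ ac_deriv_nonneg_tendsto_at_top[OF f int] vanish] by simp
  moreover have "(LINT t:{0<..}|lborel. f' t) = (LINT t:{0..x}|lborel. f' t) + (LINT t:{x<..}|lborel. f' t)"
  proof -
    have int_Ici: "set_integrable lborel {0..} f'"
      using int set_integral_Ioi_eq_Ici(1) by blast
    have "{0..} = {0..x} \<union> {x<..}"
      using x by auto
    moreover have "(LINT t:{0..x} \<union> {x<..}|lborel. f' t)
        = (LINT t:{0..x}|lborel. f' t) + (LINT t:{x<..}|lborel. f' t)"
      by (rule set_integral_Un) (use x in \<open>auto intro: set_integrable_subset[OF int_Ici]\<close>)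
    ultimately have "(LINT t:{0..}|lborel. f' t) = (LINT t:{0..x}|lborel. f' t) + (LINT t:{x<..}|lborel. f' t)"
      by simp
    then show ?thesis
      by (simp only: set_integral_Ioi_eq_Ici(2)[of 0])
  qed
  moreover have "f x = f 0 + (LINT t:{0..x}|lborel. f' t)"
    using f x unfolding ac_deriv_nonneg_def by blast
  ultimately show ?thesis
    by linarith
qed

lemma ac_deriv_nonneg_increment_le:
  assumes f: "ac_deriv_nonneg f f'" and g: "set_integrable lborel {0<..} g"
    and g_nonneg: "\<And>t. 0 \<le> g t"
    and f'_le: "AE t in lborel. N < t \<longrightarrow> f' t \<le> g t"
    and N: "0 \<le> N" and X: "N \<le> X"
  shows "f X \<le> f N + (LINT t:{0<..}|lborel. g t)"
proof -
  have "0 \<le> X"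
    using N X by linarith
  then have int_X: "set_integrable lborel {0..X} f'" and f_X: "f X = f 0 + (LINT t:{0..X}|lborel. f' t)"
    using f unfolding ac_deriv_nonneg_def by blast+
  have f_N: "f N = f 0 + (LINT t:{0..N}|lborel. f' t)"
    using f N unfolding ac_deriv_nonneg_def by blast
  have int_NX: "set_integrable lborel {N<..X} f'"
    using N by (intro set_integrable_subset[OF int_X]) auto
  have "{0..X} = {0..N} \<union> {N<..X}"
    using N X by auto
  then have "(LINT t:{0..X}|lborel. f' t) = (LINT t:{0..N}|lborel. f' t) + (LINT t:{N<..X}|lborel. f' t)"
    using N by (auto intro!: set_integral_Un intro: set_integrable_subset[OF int_X])
  moreover have "(LINT t:{N<..X}|lborel. f' t) \<le> (LINT t:{N<..X}|lborel. g t)"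
    using N f'_le
    by (intro set_integral_mono_AE int_NX set_integrable_subset[OF g]) (auto elim!: eventually_mono)
  moreover have "(LINT t:{N<..X}|lborel. g t) \<le> (LINT t:{0<..}|lborel. g t)"
    using N by (intro set_integral_mono_set g g_nonneg) auto
  ultimately show ?thesis
    using f_X f_N by linarith
qed

lemma square_sum_le:
  fixes x y :: real
  shows "(x + y) ^ 2 \<le> 2 * x ^ 2 + 2 * y ^ 2"
  using sum_squares_bound[of x y] by (simp add: power2_sum)

lemma square_quotient_expand:
  fixes R R' V W :: real
  assumes "R ^ 2 * R' \<noteq> 0"
  shows "(2 * R * R' * V + R ^ 2 * W) ^ 2 / (R ^ 2 * R')
    = 4 * (R' * V ^ 2) + 4 * (R * V * W) + (R ^ 2 * W) ^ 2 / (R ^ 2 * R')"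
  using assms by (simp add: field_simps power2_eq_square)

lemma minus_product_deriv_le:
  fixes R R' V W :: real
  assumes "0 \<le> R * R'"
  shows "- (2 * (R * R' * V ^ 2) + 2 * (R ^ 2 * V * W)) \<le> V ^ 2 + (R ^ 2 * W) ^ 2"
proof -
  have "0 \<le> R * R' * V ^ 2" and "0 \<le> (V + R ^ 2 * W) ^ 2"
    using assms by simp_all
  then show ?thesis
    unfolding power2_sum by (simp add: algebra_simps)
qed

section \<open>The weight\<close>

locale cube_linear_growth =
  fixes r r' :: "real \<Rightarrow> real" and theta_lo theta_hi :: real
  assumes ac: "ac_deriv_nonneg r r'"
    and r0_pos: "0 < r 0"
    and theta_lo_pos: "0 < theta_lo" and theta_lo_le_hi: "theta_lo \<le> theta_hi"
    and derivative_bounds: "AE x in lborel. 0 < x \<longrightarrow>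
      theta_lo \<le> r x ^ 2 * r' x \<and> r x ^ 2 * r' x \<le> theta_hi"
begin

lemma r_measurable [measurable]:
  "r \<in> borel_measurable (restrict_space lborel {0<..})"
  "r' \<in> borel_measurable (restrict_space lborel {0<..})"
  using ac_deriv_nonneg_measurable[OF ac] by auto

lemma r_cube_ac: "ac_deriv_nonneg (\<lambda>x. r x ^ 3) (\<lambda>x. 3 * (r x ^ 2 * r' x))"
  using ac_deriv_nonneg_mult[OF ac_deriv_nonneg_mult[OF ac ac] ac]
  by (rule ac_deriv_nonneg_cong) (simp_all add: power3_eq_cube power2_eq_square algebra_simps)

lemma r_cube_bounds:
  assumes x: "0 \<le> x"
  shows "r 0 ^ 3 + 3 * theta_lo * x \<le> r x ^ 3" and "r x ^ 3 \<le> r 0 ^ 3 + 3 * theta_hi * x"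
proof -
  have int: "set_integrable lborel {0..x} (\<lambda>t. 3 * (r t ^ 2 * r' t))"
    and eq: "r x ^ 3 = r 0 ^ 3 + (LINT t:{0..x}|lborel. 3 * (r t ^ 2 * r' t))"
    using r_cube_ac x unfolding ac_deriv_nonneg_def by blast+
  have const: "set_integrable lborel {0..x} (\<lambda>t. 3 * c)"
    and const_integral: "(LINT t:{0..x}|lborel. 3 * c) = 3 * c * x" for c
    using x by (simp_all add: set_integrable_def set_integral_const)
  have ae: "AE t in lborel. t \<in> {0..x} \<longrightarrow>
      3 * theta_lo \<le> 3 * (r t ^ 2 * r' t) \<and> 3 * (r t ^ 2 * r' t) \<le> 3 * theta_hi"
    using derivative_bounds AE_lborel_singleton[of 0] by eventually_elim auto
  have "(LINT t:{0..x}|lborel. 3 * theta_lo) \<le> (LINT t:{0..x}|lborel. 3 * (r t ^ 2 * r' t))"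
    using ae by (intro set_integral_mono_AE const int) (auto elim!: eventually_mono)
  then show "r 0 ^ 3 + 3 * theta_lo * x \<le> r x ^ 3"
    unfolding eq const_integral by simp
  have "(LINT t:{0..x}|lborel. 3 * (r t ^ 2 * r' t)) \<le> (LINT t:{0..x}|lborel. 3 * theta_hi)"
    using ae by (intro set_integral_mono_AE const int) (auto elim!: eventually_mono)
  then show "r x ^ 3 \<le> r 0 ^ 3 + 3 * theta_hi * x"
    unfolding eq const_integral by simp
qed

lemma r0_le_r:
  assumes "0 \<le> x"
  shows "r 0 \<le> r x"
proof -
  have "r 0 ^ 3 \<le> r x ^ 3"
    using r_cube_bounds(1)[OF assms] theta_lo_pos assms by (smt (verit) mult_nonneg_nonneg)
  moreover have "0 < r x ^ 3"
    using calculation zero_less_power[OF r0_pos, of 3] by linarith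
  then have "0 < r x"
    by (simp add: zero_less_power_eq)
  ultimately show ?thesis
    using power_le_imp_le_base[of "r 0" 2 "r x"] by simp
qed

lemma r_pos: "0 \<le> x \<Longrightarrow> 0 < r x"
  using r0_le_r r0_pos by fastforce

lemma filterlim_r_at_top: "filterlim r at_top at_top"
  unfolding filterlim_at_top
proof
  fix Z :: real
  show "\<forall>\<^sub>F x in at_top. Z \<le> r x"
    using eventually_ge_at_top[of "max 0 (\<bar>Z\<bar> ^ 3 / (3 * theta_lo))"]
  proof eventually_elim
    case (elim x)
    then have "\<bar>Z\<bar> ^ 3 \<le> 3 * theta_lo * x"
      using theta_lo_pos by (simp add: field_simps)
    also have "\<dots> \<le> r x ^ 3"
      using r_cube_bounds(1)[of x] elim r0_pos by (smt (verit) zero_less_power max.bounded_iff)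
    finally have "Z ^ 3 \<le> r x ^ 3"
      by (smt (verit) power_mono_odd abs_ge_self odd_numeral)
    then show ?case
      using power_le_imp_le_base[of Z 2 "r x"] r_pos[of x] elim by simp
  qed
qed

lemma r_le_const_xi: "\<exists>C. \<forall>x\<ge>0. r x \<le> C * xi x"
proof (intro exI allI impI)
  fix x :: real
  assume x: "0 \<le> x"
  define K where "K = max (r 0 ^ 3) theta_hi"
  have "r x ^ 3 \<le> K * (1 + 3 * x)"
  proof -
    have "r x ^ 3 \<le> r 0 ^ 3 + 3 * theta_hi * x"
      using r_cube_bounds(2)[OF x] .
    also have "\<dots> \<le> K + 3 * K * x"
      using x unfolding K_def by (intro add_mono mult_right_mono) auto
    finally show ?thesis
      by (simp add: algebra_simps)
  qed
  then have "r x \<le> root 3 K * root 3 (1 + 3 * x)"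
    by (metis odd_real_root_power_cancel odd_numeral real_root_le_iff real_root_mult zero_less_numeral)
  then show "r x \<le> root 3 K * xi x"
    using x unfolding xi_def by (simp add: root_powr_inverse)
qed

lemma AE_r'_bounds:
  "AE x in lborel. 0 < x \<longrightarrow> theta_lo \<le> r x ^ 2 * r' x \<and> 0 < r' x \<and> r' x \<le> theta_hi / r 0 ^ 2
     \<and> 0 \<le> r x * r' x \<and> r x * r' x \<le> theta_hi / r 0"
  using derivative_bounds
proof eventually_elim
  case (elim x)
  show ?case
  proof
    assume x: "0 < x"
    then have lo: "theta_lo \<le> r x ^ 2 * r' x" and hi: "r x ^ 2 * r' x \<le> theta_hi"
      using elim by auto
    have r0: "r 0 \<le> r x" and rx: "0 < r x"
      using r0_le_r r_pos x by auto
    have r': "0 < r' x"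
      using lo theta_lo_pos rx by (smt (verit) zero_less_mult_pos zero_less_power)
    have "r 0 ^ 2 * r' x \<le> r x ^ 2 * r' x"
      using r0 r' r0_pos by (intro mult_right_mono power_mono) auto
    then have "r' x \<le> theta_hi / r 0 ^ 2"
      using hi r0_pos by (simp add: field_simps)
    moreover have "r 0 * (r x * r' x) \<le> r x ^ 2 * r' x"
      using r0 r' rx by (simp add: power2_eq_square mult_right_mono)
    then have "r x * r' x \<le> theta_hi / r 0"
      using hi r0_pos by (simp add: field_simps)
    ultimately show "theta_lo \<le> r x ^ 2 * r' x \<and> 0 < r' x \<and> r' x \<le> theta_hi / r 0 ^ 2
      \<and> 0 \<le> r x * r' x \<and> r x * r' x \<le> theta_hi / r 0"
      using lo r' rx by simp
  qed
qed

end

section \<open>Weighted estimates\<close>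

locale H1_weighted = cube_linear_growth +
  fixes v v' :: "real \<Rightarrow> real"
  assumes H1: "H1 v v'"
begin

lemma v_ac: "ac_deriv_nonneg v v'"
  and v_sq_int: "set_integrable lborel {0<..} (\<lambda>x. v x ^ 2)"
  using H1 unfolding H1_def by auto

lemma v_measurable [measurable]:
  "v \<in> borel_measurable (restrict_space lborel {0<..})"
  "v' \<in> borel_measurable (restrict_space lborel {0<..})"
  using ac_deriv_nonneg_measurable[OF v_ac] by auto

lemma r_sq_v'_sq_int: "set_integrable lborel {0<..} (\<lambda>x. (r x ^ 2 * v' x) ^ 2)"
proof -
  obtain C where C: "\<And>x. 0 \<le> x \<Longrightarrow> r x \<le> C * xi x"
    using r_le_const_xi by blast
  have "set_integrable lborel {0<..} (\<lambda>x. C ^ 4 * (xi x ^ 2 * v' x) ^ 2)"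
    using H1 unfolding H1_def by simp
  then show ?thesis
  proof (rule set_integrable_Ioi_bound)
    show "AE x in lborel. 0 < x \<longrightarrow> \<bar>(r x ^ 2 * v' x) ^ 2\<bar> \<le> C ^ 4 * (xi x ^ 2 * v' x) ^ 2"
    proof (intro AE_I2 impI)
      fix x :: real
      assume "0 < x"
      then have "0 \<le> r x" and "r x \<le> C * xi x"
        using C r_pos less_imp_le by auto
      then have "r x ^ 4 \<le> (C * xi x) ^ 4"
        by (rule power_mono[rotated])
      then have "r x ^ 4 * v' x ^ 2 \<le> (C * xi x) ^ 4 * v' x ^ 2"
        by (rule mult_right_mono) simp
      then show "\<bar>(r x ^ 2 * v' x) ^ 2\<bar> \<le> C ^ 4 * (xi x ^ 2 * v' x) ^ 2"
        by (simp add: power_mult_distrib flip: power_mult)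
    qed
  qed measurable
qed

lemma r'_v_sq_int: "set_integrable lborel {0<..} (\<lambda>x. r' x * v x ^ 2)"
proof (rule set_integrable_Ioi_bound)
  show "set_integrable lborel {0<..} (\<lambda>x. theta_hi / r 0 ^ 2 * v x ^ 2)"
    using v_sq_int by simp
  show "AE x in lborel. 0 < x \<longrightarrow> \<bar>r' x * v x ^ 2\<bar> \<le> theta_hi / r 0 ^ 2 * v x ^ 2"
    using AE_r'_bounds
  proof eventually_elim
    case (elim x)
    show ?case
    proof
      assume "0 < x"
      then have "0 < r' x" and "r' x \<le> theta_hi / r 0 ^ 2"
        using elim by auto
      then have "\<bar>r' x * v x ^ 2\<bar> = r' x * v x ^ 2"
        by simp
      also have "\<dots> \<le> theta_hi / r 0 ^ 2 * v x ^ 2"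
        using \<open>r' x \<le> theta_hi / r 0 ^ 2\<close> by (rule mult_right_mono) simp
      finally show "\<bar>r' x * v x ^ 2\<bar> \<le> theta_hi / r 0 ^ 2 * v x ^ 2" .
    qed
  qed
qed measurable

lemma r_r'_v_sq_int: "set_integrable lborel {0<..} (\<lambda>x. r x * r' x * v x ^ 2)"
proof (rule set_integrable_Ioi_bound)
  show "set_integrable lborel {0<..} (\<lambda>x. theta_hi / r 0 * v x ^ 2)"
    using v_sq_int by simp
  show "AE x in lborel. 0 < x \<longrightarrow> \<bar>r x * r' x * v x ^ 2\<bar> \<le> theta_hi / r 0 * v x ^ 2"
    using AE_r'_bounds
  proof eventually_elim
    case (elim x)
    show ?case
    proof
      assume "0 < x"
      then have "0 \<le> r x * r' x" and "r x * r' x \<le> theta_hi / r 0"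
        using elim by auto
      then have "\<bar>r x * r' x * v x ^ 2\<bar> = r x * r' x * v x ^ 2"
        by simp
      also have "\<dots> \<le> theta_hi / r 0 * v x ^ 2"
        using \<open>r x * r' x \<le> theta_hi / r 0\<close> by (rule mult_right_mono) simp
      finally show "\<bar>r x * r' x * v x ^ 2\<bar> \<le> theta_hi / r 0 * v x ^ 2" .
    qed
  qed
qed measurable

lemma r_v_v'_int: "set_integrable lborel {0<..} (\<lambda>x. r x * v x * v' x)"
proof (rule set_integrable_Ioi_bound)
  show "set_integrable lborel {0<..} (\<lambda>x. (v x ^ 2 + (r x ^ 2 * v' x) ^ 2) / (2 * r 0))"
    using v_sq_int r_sq_v'_sq_int by simp
  show "AE x in lborel. 0 < x \<longrightarrow> \<bar>r x * v x * v' x\<bar> \<le> (v x ^ 2 + (r x ^ 2 * v' x) ^ 2) / (2 * r 0)"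
  proof (intro AE_I2 impI)
    fix x :: real
    assume "0 < x"
    then have r0: "r 0 \<le> r x" and rx: "0 < r x"
      using r0_le_r r_pos by auto
    have "2 * \<bar>r x * v x * v' x\<bar> * r 0 \<le> 2 * \<bar>r x * v x * v' x\<bar> * r x"
      using r0 by (intro mult_left_mono) auto
    also have "\<dots> = 2 * \<bar>v x\<bar> * \<bar>r x ^ 2 * v' x\<bar>"
      using rx by (simp add: abs_mult power2_eq_square)
    also have "\<dots> \<le> v x ^ 2 + (r x ^ 2 * v' x) ^ 2"
      using sum_squares_bound[of "\<bar>v x\<bar>" "\<bar>r x ^ 2 * v' x\<bar>"] by simp
    finally show "\<bar>r x * v x * v' x\<bar> \<le> (v x ^ 2 + (r x ^ 2 * v' x) ^ 2) / (2 * r 0)"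
      using r0_pos by (simp add: field_simps)
  qed
qed measurable

lemma r_sq_v_v'_int: "set_integrable lborel {0<..} (\<lambda>x. r x ^ 2 * v x * v' x)"
proof (rule set_integrable_Ioi_bound)
  show "set_integrable lborel {0<..} (\<lambda>x. (v x ^ 2 + (r x ^ 2 * v' x) ^ 2) / 2)"
    using v_sq_int r_sq_v'_sq_int by simp
  show "AE x in lborel. 0 < x \<longrightarrow> \<bar>r x ^ 2 * v x * v' x\<bar> \<le> (v x ^ 2 + (r x ^ 2 * v' x) ^ 2) / 2"
  proof (intro AE_I2 impI)
    fix x :: real
    have "2 * \<bar>v x\<bar> * \<bar>r x ^ 2 * v' x\<bar> \<le> v x ^ 2 + (r x ^ 2 * v' x) ^ 2"
      using sum_squares_bound[of "\<bar>v x\<bar>" "\<bar>r x ^ 2 * v' x\<bar>"] by simp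
    then show "\<bar>r x ^ 2 * v x * v' x\<bar> \<le> (v x ^ 2 + (r x ^ 2 * v' x) ^ 2) / 2"
      by (simp add: abs_mult mult_ac)
  qed
qed measurable

lemma r_sq_v'_sq_div_int: "set_integrable lborel {0<..} (\<lambda>x. (r x ^ 2 * v' x) ^ 2 / (r x ^ 2 * r' x))"
proof (rule set_integrable_Ioi_bound)
  show "set_integrable lborel {0<..} (\<lambda>x. (r x ^ 2 * v' x) ^ 2 / theta_lo)"
    using r_sq_v'_sq_int by simp
  show "AE x in lborel. 0 < x \<longrightarrow> \<bar>(r x ^ 2 * v' x) ^ 2 / (r x ^ 2 * r' x)\<bar> \<le> (r x ^ 2 * v' x) ^ 2 / theta_lo"
    using AE_r'_bounds
  proof eventually_elim
    case (elim x)
    show ?case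
    proof
      assume "0 < x"
      then have lo: "theta_lo \<le> r x ^ 2 * r' x"
        using elim by auto
      then have "\<bar>(r x ^ 2 * v' x) ^ 2 / (r x ^ 2 * r' x)\<bar> = (r x ^ 2 * v' x) ^ 2 / (r x ^ 2 * r' x)"
        using theta_lo_pos by simp
      also have "\<dots> \<le> (r x ^ 2 * v' x) ^ 2 / theta_lo"
        using lo theta_lo_pos by (intro divide_left_mono) auto
      finally show "\<bar>(r x ^ 2 * v' x) ^ 2 / (r x ^ 2 * r' x)\<bar> \<le> (r x ^ 2 * v' x) ^ 2 / theta_lo" .
    qed
  qed
qed measurable

lemma r_sq_v_deriv_sq_int:
  "set_integrable lborel {0<..} (\<lambda>x. (2 * r x * r' x * v x + r x ^ 2 * v' x) ^ 2)"
proof (rule set_integrable_Ioi_bound)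
  show "set_integrable lborel {0<..} (\<lambda>x. 8 * (theta_hi / r 0) ^ 2 * v x ^ 2 + 2 * (r x ^ 2 * v' x) ^ 2)"
    using v_sq_int r_sq_v'_sq_int by (intro set_integral_add) auto
  show "AE x in lborel. 0 < x \<longrightarrow> \<bar>(2 * r x * r' x * v x + r x ^ 2 * v' x) ^ 2\<bar>
      \<le> 8 * (theta_hi / r 0) ^ 2 * v x ^ 2 + 2 * (r x ^ 2 * v' x) ^ 2"
    using AE_r'_bounds
  proof eventually_elim
    case (elim x)
    show ?case
    proof
      assume "0 < x"
      then have "(r x * r' x) ^ 2 \<le> (theta_hi / r 0) ^ 2"
        using elim by (intro power_mono) auto
      then have "(r x * r' x) ^ 2 * v x ^ 2 \<le> (theta_hi / r 0) ^ 2 * v x ^ 2"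
        by (rule mult_right_mono) simp
      moreover have "(2 * r x * r' x * v x + r x ^ 2 * v' x) ^ 2
          \<le> 8 * ((r x * r' x) ^ 2 * v x ^ 2) + 2 * (r x ^ 2 * v' x) ^ 2"
        using square_sum_le[of "2 * r x * r' x * v x" "r x ^ 2 * v' x"]
        by (simp add: power_mult_distrib)
      ultimately show "\<bar>(2 * r x * r' x * v x + r x ^ 2 * v' x) ^ 2\<bar>
          \<le> 8 * (theta_hi / r 0) ^ 2 * v x ^ 2 + 2 * (r x ^ 2 * v' x) ^ 2"
        by simp
    qed
  qed
qed measurable

lemma r_v_sq_ac: "ac_deriv_nonneg (\<lambda>x. r x * v x ^ 2) (\<lambda>x. r' x * v x ^ 2 + 2 * (r x * v x * v' x))"
  using ac_deriv_nonneg_mult[OF ac ac_deriv_nonneg_mult[OF v_ac v_ac]]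
  by (rule ac_deriv_nonneg_cong) (simp_all add: power2_eq_square algebra_simps)

lemma r_sq_v_sq_ac: "ac_deriv_nonneg (\<lambda>x. r x ^ 2 * v x ^ 2)
    (\<lambda>x. 2 * (r x * r' x * v x ^ 2) + 2 * (r x ^ 2 * v x * v' x))"
  using ac_deriv_nonneg_mult[OF ac_deriv_nonneg_mult[OF ac ac] ac_deriv_nonneg_mult[OF v_ac v_ac]]
  by (rule ac_deriv_nonneg_cong) (simp_all add: power2_eq_square algebra_simps)

lemma r_sq_v_sq_deriv_int:
  "set_integrable lborel {0<..} (\<lambda>x. 2 * (r x * r' x * v x ^ 2) + 2 * (r x ^ 2 * v x * v' x))"
  using r_r'_v_sq_int r_sq_v_v'_int by (intro set_integral_add) auto

lemma r_sq_v_sq_not_eventually_ge: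
  assumes c: "0 < c"
  shows "\<not> (\<forall>\<^sub>F x in at_top. c \<le> r x ^ 2 * v x ^ 2)"
proof
  assume "\<forall>\<^sub>F x in at_top. c \<le> r x ^ 2 * v x ^ 2"
  then obtain N0 where above0: "\<And>x. N0 \<le> x \<Longrightarrow> c \<le> r x ^ 2 * v x ^ 2"
    unfolding eventually_at_top_linorder by auto
  define N where "N = max N0 0"
  have N: "0 \<le> N" and above: "\<And>x. N \<le> x \<Longrightarrow> c \<le> r x ^ 2 * v x ^ 2"
    using above0 unfolding N_def by auto
  have "AE t in lborel. N < t \<longrightarrow> r' t \<le> theta_hi / c * v t ^ 2"
    using derivative_bounds AE_r'_bounds
  proof eventually_elim
    case (elim t)
    show ?case
    proof
      assume "N < t"
      then have r': "0 < r' t" and hi: "r t ^ 2 * r' t \<le> theta_hi"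
        using elim N by auto
      have "r' t * c \<le> r' t * (r t ^ 2 * v t ^ 2)"
        using above[of t] \<open>N < t\<close> r' by (intro mult_left_mono) auto
      also have "\<dots> = (r t ^ 2 * r' t) * v t ^ 2"
        by (simp add: mult_ac)
      also have "\<dots> \<le> theta_hi * v t ^ 2"
        using hi by (rule mult_right_mono) simp
      finally show "r' t \<le> theta_hi / c * v t ^ 2"
        using c by (simp add: field_simps)
    qed
  qed
  then have bounded: "r X \<le> r N + (LINT t:{0<..}|lborel. theta_hi / c * v t ^ 2)" if "N \<le> X" for X
    using v_sq_int theta_lo_pos theta_lo_le_hi c N that
    by (intro ac_deriv_nonneg_increment_le[OF ac]) auto
  have "\<forall>\<^sub>F X in at_top. r N + (LINT t:{0<..}|lborel. theta_hi / c * v t ^ 2) + 1 \<le> r X"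
    using filterlim_r_at_top unfolding filterlim_at_top by blast
  then obtain X0 where
    large: "\<And>X. X0 \<le> X \<Longrightarrow> r N + (LINT t:{0<..}|lborel. theta_hi / c * v t ^ 2) + 1 \<le> r X"
    unfolding eventually_at_top_linorder by blast
  show False
    using large[of "max N X0"] bounded[of "max N X0"] by simp
qed

lemma r_sq_v_sq_tendsto_0: "((\<lambda>x. r x ^ 2 * v x ^ 2) \<longlongrightarrow> 0) at_top"
proof -
  define L where "L = r 0 ^ 2 * v 0 ^ 2
    + (LINT x:{0<..}|lborel. 2 * (r x * r' x * v x ^ 2) + 2 * (r x ^ 2 * v x * v' x))"
  have lim: "((\<lambda>x. r x ^ 2 * v x ^ 2) \<longlongrightarrow> L) at_top"
    unfolding L_def by (rule ac_deriv_nonneg_tendsto_at_top[OF r_sq_v_sq_ac r_sq_v_sq_deriv_int])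
  have "0 \<le> L"
    by (rule tendsto_lowerbound[OF lim]) auto
  moreover have "\<not> 0 < L"
  proof
    assume "0 < L"
    then have "\<forall>\<^sub>F x in at_top. L / 2 \<le> r x ^ 2 * v x ^ 2"
      using order_tendstoD(1)[OF lim, of "L / 2"] by (auto elim: eventually_mono)
    with \<open>0 < L\<close> show False
      using r_sq_v_sq_not_eventually_ge[of "L / 2"] by simp
  qed
  ultimately show ?thesis
    using lim by (metis linorder_less_linear not_less)
qed

lemma r_v_sq_tendsto_0: "((\<lambda>x. r x * v x ^ 2) \<longlongrightarrow> 0) at_top"
proof (rule tendsto_sandwich)
  show "\<forall>\<^sub>F x in at_top. 0 \<le> r x * v x ^ 2"
    using eventually_ge_at_top[of 0] by eventually_elim (simp add: r_pos less_imp_le)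
  show "\<forall>\<^sub>F x in at_top. r x * v x ^ 2 \<le> r x ^ 2 * v x ^ 2 / r 0"
    using eventually_ge_at_top[of 0]
  proof eventually_elim
    case (elim x)
    then have "r 0 * (r x * v x ^ 2) \<le> r x * (r x * v x ^ 2)"
      using r0_le_r r_pos by (intro mult_right_mono) (auto simp: less_imp_le)
    then show ?case
      using r0_pos by (simp add: field_simps power2_eq_square)
  qed
  show "((\<lambda>x. r x ^ 2 * v x ^ 2 / r 0) \<longlongrightarrow> 0) at_top"
    using tendsto_divide_zero[OF r_sq_v_sq_tendsto_0] .
qed simp

lemma boundary_term_eq:
  "r 0 * v 0 ^ 2 + (LINT x:{0<..}|lborel. r' x * v x ^ 2) + 2 * (LINT x:{0<..}|lborel. r x * v x * v' x) = 0"
proof -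
  have "r 0 * v 0 ^ 2 = - (LINT x:{0<..}|lborel. r' x * v x ^ 2 + 2 * (r x * v x * v' x))"
    using r'_v_sq_int r_v_v'_int
    by (intro ac_deriv_nonneg_eq_tail_integral[OF r_v_sq_ac _ r_v_sq_tendsto_0]) auto
  also have "\<dots> = - (LINT x:{0<..}|lborel. r' x * v x ^ 2) - 2 * (LINT x:{0<..}|lborel. r x * v x * v' x)"
    using r'_v_sq_int r_v_v'_int by (subst set_integral_add(2)) auto
  finally show ?thesis
    by linarith
qed

lemma energy_integrand_integral:
  "(LINT x:{0<..}|lborel. (2 * r x * r' x * v x + r x ^ 2 * v' x) ^ 2 / (r x ^ 2 * r' x))
   = 4 * (LINT x:{0<..}|lborel. r' x * v x ^ 2) + 4 * (LINT x:{0<..}|lborel. r x * v x * v' x)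
     + (LINT x:{0<..}|lborel. (r x ^ 2 * v' x) ^ 2 / (r x ^ 2 * r' x))"
proof -
  have "(LINT x:{0<..}|lborel. (2 * r x * r' x * v x + r x ^ 2 * v' x) ^ 2 / (r x ^ 2 * r' x))
      = (LINT x:{0<..}|lborel. 4 * (r' x * v x ^ 2) + 4 * (r x * v x * v' x)
           + (r x ^ 2 * v' x) ^ 2 / (r x ^ 2 * r' x))"
  proof (rule set_integral_Ioi_cong_AE)
    show "AE x in lborel. 0 < x \<longrightarrow> (2 * r x * r' x * v x + r x ^ 2 * v' x) ^ 2 / (r x ^ 2 * r' x)
        = 4 * (r' x * v x ^ 2) + 4 * (r x * v x * v' x) + (r x ^ 2 * v' x) ^ 2 / (r x ^ 2 * r' x)"
      using AE_r'_bounds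
    proof eventually_elim
      case (elim x)
      then show ?case
        using theta_lo_pos by (auto intro!: square_quotient_expand)
    qed
  qed measurable
  moreover have "set_integrable lborel {0<..} (\<lambda>x. 4 * (r' x * v x ^ 2) + 4 * (r x * v x * v' x))"
    using r'_v_sq_int r_v_v'_int by (intro set_integral_add) auto
  ultimately show ?thesis
    using r'_v_sq_int r_v_v'_int r_sq_v'_sq_div_int
    by (simp add: set_integral_add(2)[of lborel "{0<..}"])
qed

lemma energy_identity:
  "(LINT x:{0<..}|lborel. (2 * r x * r' x * v x + r x ^ 2 * v' x) ^ 2 / (r x ^ 2 * r' x))
     + 2 * r 0 * v 0 ^ 2
   = (LINT x:{0<..}|lborel. (r x ^ 2 * v' x) ^ 2 / (r x ^ 2 * r' x))
     + 2 * (LINT x:{0<..}|lborel. (r x ^ 2 * r' x) / (r x ^ 2) * v x ^ 2)"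
proof -
  have "(LINT x:{0<..}|lborel. (r x ^ 2 * r' x) / (r x ^ 2) * v x ^ 2)
      = (LINT x:{0<..}|lborel. r' x * v x ^ 2)"
  proof (rule set_lebesgue_integral_cong)
    show "\<forall>x. x \<in> {0<..} \<longrightarrow> r x ^ 2 * r' x / r x ^ 2 * v x ^ 2 = r' x * v x ^ 2"
    proof (intro allI impI)
      fix x :: real
      assume "x \<in> {0<..}"
      then have "0 < r x"
        using r_pos by simp
      then show "r x ^ 2 * r' x / r x ^ 2 * v x ^ 2 = r' x * v x ^ 2"
        by simp
    qed
  qed simp
  then show ?thesis
    using energy_integrand_integral boundary_term_eq by linarith
qed

lemma r_sq_v_sq_le_energy:
  assumes x: "0 \<le> x"
  shows "r x ^ 2 * v x ^ 2 \<le> (LINT y:{0<..}|lborel. v y ^ 2) + (LINT y:{0<..}|lborel. (r y ^ 2 * v' y) ^ 2)"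
proof -
  define d where "d t = 2 * (r t * r' t * v t ^ 2) + 2 * (r t ^ 2 * v t * v' t)" for t
  have int_d: "set_integrable lborel {x<..} d"
    unfolding d_def using x by (intro set_integrable_subset[OF r_sq_v_sq_deriv_int]) auto
  have int_energy: "set_integrable lborel {0<..} (\<lambda>t. v t ^ 2 + (r t ^ 2 * v' t) ^ 2)"
    using v_sq_int r_sq_v'_sq_int by (rule set_integral_add)
  have "r x ^ 2 * v x ^ 2 = - (LINT t:{x<..}|lborel. d t)"
    unfolding d_def
    by (rule ac_deriv_nonneg_eq_tail_integral[OF r_sq_v_sq_ac r_sq_v_sq_deriv_int r_sq_v_sq_tendsto_0 x])
  also have "\<dots> = (LINT t:{x<..}|lborel. - d t)"
    using int_d by (simp add: set_integral_uminus)
  also have "\<dots> \<le> (LINT t:{x<..}|lborel. v t ^ 2 + (r t ^ 2 * v' t) ^ 2)"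
  proof (rule set_integral_mono_AE)
    show "set_integrable lborel {x<..} (\<lambda>t. - d t)"
      using int_d by (simp add: set_integrable_def)
    show "set_integrable lborel {x<..} (\<lambda>t. v t ^ 2 + (r t ^ 2 * v' t) ^ 2)"
      using x by (intro set_integrable_subset[OF int_energy]) auto
    show "AE t\<in>{x<..} in lborel. - d t \<le> v t ^ 2 + (r t ^ 2 * v' t) ^ 2"
      using AE_r'_bounds
    proof eventually_elim
      case (elim t)
      then show ?case
        unfolding d_def using x by (intro impI minus_product_deriv_le) auto
    qed
  qed
  also have "\<dots> \<le> (LINT t:{0<..}|lborel. v t ^ 2 + (r t ^ 2 * v' t) ^ 2)"
    using x by (intro set_integral_mono_set[OF int_energy]) auto
  also have "\<dots> = (LINT y:{0<..}|lborel. v y ^ 2) + (LINT y:{0<..}|lborel. (r y ^ 2 * v' y) ^ 2)"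
    using v_sq_int r_sq_v'_sq_int by (rule set_integral_add)
  finally show ?thesis .
qed

lemma r_sq_v'_sq_integral_le:
  "(LINT x:{0<..}|lborel. (r x ^ 2 * v' x) ^ 2)
    \<le> 8 / r 0 ^ 2 * theta_hi ^ 2 * (LINT x:{0<..}|lborel. v x ^ 2)
      + 2 * (LINT x:{0<..}|lborel. (2 * r x * r' x * v x + r x ^ 2 * v' x) ^ 2)"
proof -
  have "(LINT x:{0<..}|lborel. (r x ^ 2 * v' x) ^ 2)
      \<le> (LINT x:{0<..}|lborel. 8 / r 0 ^ 2 * theta_hi ^ 2 * v x ^ 2
           + 2 * (2 * r x * r' x * v x + r x ^ 2 * v' x) ^ 2)"
  proof (rule set_integral_mono_AE[OF r_sq_v'_sq_int])
    show "set_integrable lborel {0<..} (\<lambda>x. 8 / r 0 ^ 2 * theta_hi ^ 2 * v x ^ 2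
        + 2 * (2 * r x * r' x * v x + r x ^ 2 * v' x) ^ 2)"
      using v_sq_int r_sq_v_deriv_sq_int by (intro set_integral_add) auto
    show "AE x\<in>{0<..} in lborel. (r x ^ 2 * v' x) ^ 2
        \<le> 8 / r 0 ^ 2 * theta_hi ^ 2 * v x ^ 2 + 2 * (2 * r x * r' x * v x + r x ^ 2 * v' x) ^ 2"
      using AE_r'_bounds
    proof eventually_elim
      case (elim x)
      show ?case
      proof
        assume "x \<in> {0<..}"
        then have "(r x * r' x) ^ 2 \<le> (theta_hi / r 0) ^ 2"
          using elim by (intro power_mono) auto
        then have "(r x * r' x) ^ 2 * v x ^ 2 \<le> (theta_hi / r 0) ^ 2 * v x ^ 2"
          by (rule mult_right_mono) simp
        moreover have "(r x ^ 2 * v' x) ^ 2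
            \<le> 2 * (2 * r x * r' x * v x + r x ^ 2 * v' x) ^ 2 + 2 * (- 2 * r x * r' x * v x) ^ 2"
          using square_sum_le[of "2 * r x * r' x * v x + r x ^ 2 * v' x" "- 2 * r x * r' x * v x"]
          by simp
        ultimately show "(r x ^ 2 * v' x) ^ 2
            \<le> 8 / r 0 ^ 2 * theta_hi ^ 2 * v x ^ 2 + 2 * (2 * r x * r' x * v x + r x ^ 2 * v' x) ^ 2"
          by (simp add: power_mult_distrib power_divide)
      qed
    qed
  qed
  also have "\<dots> = 8 / r 0 ^ 2 * theta_hi ^ 2 * (LINT x:{0<..}|lborel. v x ^ 2)
      + 2 * (LINT x:{0<..}|lborel. (2 * r x * r' x * v x + r x ^ 2 * v' x) ^ 2)"
    using v_sq_int r_sq_v_deriv_sq_int by (subst set_integral_add(2)) auto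
  finally show ?thesis .
qed

end

theorem lemma2p1:
  fixes v v' r r' :: "real \<Rightarrow> real" and theta_lo theta_hi :: real
  assumes hv: "H1 v v'"
    and hr: "ac_deriv_nonneg r r'"
    and hr0: "r 0 > 0"
    and hth: "0 < theta_lo" "theta_lo \<le> theta_hi"
    and hbd: "AE x in lborel. 0 < x \<longrightarrow>
                theta_lo \<le> r x ^ 2 * r' x \<and> r x ^ 2 * r' x \<le> theta_hi"
  shows "((LINT x:{0<..}|lborel. (2 * r x * r' x * v x + r x ^ 2 * v' x)^2 / (r x ^ 2 * r' x))
           + 2 * r 0 * (v 0)^2
         = (LINT x:{0<..}|lborel. (r x ^ 2 * v' x)^2 / (r x ^ 2 * r' x))
           + 2 * (LINT x:{0<..}|lborel. (r x ^ 2 * r' x) / (r x ^ 2) * (v x)^2))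
       \<and> (\<forall>x\<ge>0. (v x)^2 \<le> ((LINT y:{0<..}|lborel. (v y)^2)
                           + (LINT y:{0<..}|lborel. (r y ^ 2 * v' y)^2)) / (r x)^2)
       \<and> (\<forall>x\<ge>0. (v x)^2 \<le> ((8 / (r 0)^2 * theta_hi^2 + 1) * (LINT y:{0<..}|lborel. (v y)^2)
             + 2 * (LINT y:{0<..}|lborel. (2 * r y * r' y * v y + r y ^ 2 * v' y)^2)) / (r x)^2)"
proof -
  interpret H1_weighted r r' theta_lo theta_hi v v'
    using hv hr hr0 hth hbd by unfold_locales
  define A where "A = (LINT y:{0<..}|lborel. (v y)^2)"
  define B where "B = (LINT y:{0<..}|lborel. (r y ^ 2 * v' y)^2)"
  define D where "D = (LINT y:{0<..}|lborel. (2 * r y * r' y * v y + r y ^ 2 * v' y)^2)"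
  have v_sq_le: "(v x)^2 \<le> (A + B) / (r x)^2" if "0 \<le> x" for x
    using r_sq_v_sq_le_energy[OF that] r_pos[OF that] unfolding A_def B_def
    by (simp add: pos_le_divide_eq mult.commute)
  have "A + B \<le> (8 / (r 0)^2 * theta_hi^2 + 1) * A + 2 * D"
    using r_sq_v'_sq_integral_le unfolding A_def B_def D_def by (simp add: algebra_simps)
  then have "(A + B) / (r x)^2 \<le> ((8 / (r 0)^2 * theta_hi^2 + 1) * A + 2 * D) / (r x)^2" for x
    by (rule divide_right_mono) simp
  then show ?thesis
    using energy_identity v_sq_le unfolding A_def B_def D_def by (meson order_trans)
qed

end
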